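(* Let $\mathbb{X},\mathbb{Y}$ be real normed linear spaces and $T\in\mathbb{B}(\mathbb{X},\mathbb{Y})$ with $T\neq0$ and $M_T\neq\emptyset$. Then $T$ is a smooth point of $\mathbb{B}(\mathbb{X},\mathbb{Y})$ if and only if all of the following hold: (i) $M_T=\{\pm x_0\}$ for some $x_0\in S_{\mathbb{X}}$; (ii) $Tx_0$ is a smooth point of $\mathbb{Y}$; (iii) for every $A\in\mathbb{B}(\mathbb{X},\mathbb{Y})$, $T\perp_B A$ if and only if $Tx_0\perp_B Ax_0$.
   Context: All spaces are real; $\mathbb{B}(\mathbb{X},\mathbb{Y})$ has the operator norm; $S_{\mathbb{X}}$ is the unit sphere; $M_T=\{x\in S_{\mathbb{X}}:\|Tx\|=\|T\|\}$. A nonzero element $x$ of a normed space $\mathbb{Z}$ is smooth if there is a unique $f\in\mathbb{Z}^*$ with $\|f\|=1$ and $f(x)=\|x\|$. $x\perp_B y$ means $\|x+\lambda y\|\ge\|x\|$ for all $\lambda\in\mathbb{R}$. *)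

theory Defs
  imports "HOL-Analysis.Analysis"
begin

definition smooth_point :: "'a::real_normed_vector \<Rightarrow> bool" where
  "smooth_point x \<longleftrightarrow> x \<noteq> 0 \<and>
     (\<exists>!f :: 'a \<Rightarrow>\<^sub>L real. norm f = 1 \<and> blinfun_apply f x = norm x)"

definition birkhoff_orth :: "'a::real_normed_vector \<Rightarrow> 'a \<Rightarrow> bool" where
  "birkhoff_orth x y \<longleftrightarrow> (\<forall>t::real. norm (x + t *\<^sub>R y) \<ge> norm x)"

definition norm_attain_set :: "('a::real_normed_vector \<Rightarrow>\<^sub>L 'b::real_normed_vector) \<Rightarrow> 'a set" where
  "norm_attain_set T = {x. norm x = 1 \<and> norm (blinfun_apply T x) = norm T}"

end

(*
  A support functional of T is obtained from a norm-attaining x0 and a support functional g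
  of T x0 as A \<mapsto> g (A x0).  Testing such functionals against rank-one operators shows that
  they determine x0 and g up to a common scalar; so if T is smooth, the uniqueness of its
  support functional forces M_T = {\<pm>x0} and uniqueness of g.  Orthogonality T \<perp>_B A means
  that some support functional of T vanishes at A (James), which for smooth T is A \<mapsto> g (A x0)
  and yields T x0 \<perp>_B A x0.  Conversely, under (i)-(iii) any support functional \<Psi> of T
  annihilates B = A - (\<Psi> A / \<parallel>T\<parallel>) T, so T \<perp>_B B, T x0 \<perp>_B B x0, and the unique
  support functional g of T x0 vanishes at B x0, i.e. \<Psi> A = g (A x0).
*)
theory Submission
  imports Defs
begin

section \<open>Hahn-Banach for norm-dominated functionals\<close>

text \<open>A linear functional on a subspace is represented by its graph, so that Zorn's lemma can
  range over sets of pairs.\<close>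
definition linear_graph :: "('a::real_vector \<times> real) set \<Rightarrow> bool" where
  "linear_graph G \<longleftrightarrow> (0, 0) \<in> G
     \<and> (\<forall>x a b. (x, a) \<in> G \<longrightarrow> (x, b) \<in> G \<longrightarrow> a = b)
     \<and> (\<forall>x a y b. (x, a) \<in> G \<longrightarrow> (y, b) \<in> G \<longrightarrow> (x + y, a + b) \<in> G)
     \<and> (\<forall>x a c. (x, a) \<in> G \<longrightarrow> (c *\<^sub>R x, c * a) \<in> G)"

definition norm_dominated :: "('a::real_normed_vector \<times> real) set \<Rightarrow> bool" where
  "norm_dominated G \<longleftrightarrow> (\<forall>(x, a) \<in> G. a \<le> norm x)"

lemma linear_graphD:
  assumes "linear_graph G"
  shows linear_graph_zero: "(0, 0) \<in> G"
    and linear_graph_unique: "(x, a) \<in> G \<Longrightarrow> (x, b) \<in> G \<Longrightarrow> a = b"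
    and linear_graph_add: "(x, a) \<in> G \<Longrightarrow> (y, b) \<in> G \<Longrightarrow> (x + y, a + b) \<in> G"
    and linear_graph_scaleR: "(x, a) \<in> G \<Longrightarrow> (c *\<^sub>R x, c * a) \<in> G"
  using assms unfolding linear_graph_def by blast+

definition graph_extend :: "('a::real_vector \<times> real) set \<Rightarrow> 'a \<Rightarrow> real \<Rightarrow> ('a \<times> real) set" where
  "graph_extend G z c = {(x + t *\<^sub>R z, a + t * c) | x a t. (x, a) \<in> G}"

lemma graph_extendI: "(x, a) \<in> G \<Longrightarrow> (x + t *\<^sub>R z, a + t * c) \<in> graph_extend G z c"
  unfolding graph_extend_def by blast

lemma graph_extendE:
  assumes "(y, b) \<in> graph_extend G z c"
  obtains x a t where "(x, a) \<in> G" "y = x + t *\<^sub>R z" "b = a + t * c"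
  using assms unfolding graph_extend_def by blast

lemma graph_extend_superset:
  assumes "(0, 0) \<in> G"
  shows "insert (z, c) G \<subseteq> graph_extend G z c"
proof -
  have "(0 + 1 *\<^sub>R z, 0 + 1 * c) \<in> graph_extend G z c" using graph_extendI[OF assms] .
  moreover have "(x + 0 *\<^sub>R z, a + 0 * c) \<in> graph_extend G z c" if "(x, a) \<in> G" for x a
    using graph_extendI[OF that] .
  ultimately show ?thesis by auto
qed

lemma graph_extend_coordinate_unique:
  assumes G: "linear_graph G" and z: "z \<notin> fst ` G"
    and "(x, a) \<in> G" "(x', b) \<in> G" and eq: "x + t *\<^sub>R z = x' + t' *\<^sub>R z"
  shows "t = t'"
proof (rule ccontr)
  assume "t \<noteq> t'"
  have "(x + (-1) *\<^sub>R x', a + (-1) * b) \<in> G"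
    by (rule linear_graph_add[OF G assms(3) linear_graph_scaleR[OF G assms(4)]])
  then have "(x - x', a - b) \<in> G" by simp
  then have "(inverse (t' - t) *\<^sub>R (x - x'), inverse (t' - t) * (a - b)) \<in> G"
    by (rule linear_graph_scaleR[OF G])
  then have "inverse (t' - t) *\<^sub>R (x - x') \<in> fst ` G"
    by (rule image_eqI[rotated]) simp
  moreover have "x - x' = (t' - t) *\<^sub>R z"
    using eq by (simp add: algebra_simps)
  ultimately have "z \<in> fst ` G" using \<open>t \<noteq> t'\<close> by simp
  with z show False ..
qed

lemma linear_graph_extend:
  assumes G: "linear_graph G" and z: "z \<notin> fst ` G"
  shows "linear_graph (graph_extend G z c)"
  unfolding linear_graph_def
proof (intro conjI allI impI)
  have "(0 + 0 *\<^sub>R z, 0 + 0 * c) \<in> graph_extend G z c"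
    using graph_extendI[OF linear_graph_zero[OF G]] .
  then show "(0, 0) \<in> graph_extend G z c" by simp
next
  fix y a b assume "(y, a) \<in> graph_extend G z c" "(y, b) \<in> graph_extend G z c"
  obtain x a1 t where 1: "(x, a1) \<in> G" "y = x + t *\<^sub>R z" "a = a1 + t * c"
    using graph_extendE[OF \<open>(y, a) \<in> _\<close>] .
  obtain x' b1 t' where 2: "(x', b1) \<in> G" "y = x' + t' *\<^sub>R z" "b = b1 + t' * c"
    using graph_extendE[OF \<open>(y, b) \<in> _\<close>] .
  have t: "t = t'"
    using graph_extend_coordinate_unique[OF G z 1(1) 2(1)] 1(2) 2(2) by simp
  then have "x = x'" using 1 2 by simp
  then show "a = b" using linear_graph_unique[OF G 1(1)] 1 2 t by simp
next
  fix x a y b assume "(x, a) \<in> graph_extend G z c" "(y, b) \<in> graph_extend G z c"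
  obtain x1 a1 t where 1: "(x1, a1) \<in> G" "x = x1 + t *\<^sub>R z" "a = a1 + t * c"
    using graph_extendE[OF \<open>(x, a) \<in> _\<close>] .
  obtain x2 a2 t' where 2: "(x2, a2) \<in> G" "y = x2 + t' *\<^sub>R z" "b = a2 + t' * c"
    using graph_extendE[OF \<open>(y, b) \<in> _\<close>] .
  have "x + y = (x1 + x2) + (t + t') *\<^sub>R z" "a + b = (a1 + a2) + (t + t') * c"
    using 1 2 by (simp_all add: algebra_simps)
  then show "(x + y, a + b) \<in> graph_extend G z c"
    using graph_extendI[OF linear_graph_add[OF G 1(1) 2(1)]] by simp
next
  fix x a r assume "(x, a) \<in> graph_extend G z c"
  then obtain x1 a1 t where 1: "(x1, a1) \<in> G" "x = x1 + t *\<^sub>R z" "a = a1 + t * c"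
    by (rule graph_extendE)
  have "r *\<^sub>R x = r *\<^sub>R x1 + (r * t) *\<^sub>R z" "r * a = r * a1 + (r * t) * c"
    using 1 by (simp_all add: algebra_simps)
  then show "(r *\<^sub>R x, r * a) \<in> graph_extend G z c"
    using graph_extendI[OF linear_graph_scaleR[OF G 1(1)]] by simp
qed

text \<open>The admissible values c for the new direction z form the interval between
  the supremum of a - \<parallel>u - z\<parallel> and the infimum of \<parallel>u + z\<parallel> - a; it is nonempty
  because a + b \<le> \<parallel>u + v\<parallel> \<le> \<parallel>u - z\<parallel> + \<parallel>v + z\<parallel>.\<close>
lemma extension_constant_exists:
  assumes G: "linear_graph G" and dom: "norm_dominated G"
  shows "\<exists>c. \<forall>(u, a) \<in> G. a - norm (u - z) \<le> c \<and> c \<le> norm (u + z) - a"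
proof -
  define S where "S = {a - norm (u - z) | u a. (u, a) \<in> G}"
  have key: "a - norm (u - z) \<le> norm (v + z) - b" if "(u, a) \<in> G" "(v, b) \<in> G" for u a v b
  proof -
    have "a + b \<le> norm (u + v)"
      using dom linear_graph_add[OF G that] unfolding norm_dominated_def by blast
    also have "\<dots> = norm ((u - z) + (v + z))" by simp
    also have "\<dots> \<le> norm (u - z) + norm (v + z)" by (rule norm_triangle_ineq)
    finally show ?thesis by simp
  qed
  have "S \<noteq> {}" using linear_graph_zero[OF G] unfolding S_def by blast
  moreover have "bdd_above S"
    unfolding S_def bdd_above_def using key[OF _ linear_graph_zero[OF G]] by auto
  ultimately have "a - norm (u - z) \<le> Sup S \<and> Sup S \<le> norm (u + z) - a" if "(u, a) \<in> G" for u a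
    using that key by (auto intro!: cSup_upper cSup_least simp: S_def)
  then show ?thesis by blast
qed

lemma norm_dominated_graph_extend:
  assumes G: "linear_graph G" and dom: "norm_dominated G"
    and c: "\<forall>(u, a) \<in> G. a - norm (u - z) \<le> c \<and> c \<le> norm (u + z) - a"
  shows "norm_dominated (graph_extend G z c)"
  unfolding norm_dominated_def
proof clarify
  fix y b assume "(y, b) \<in> graph_extend G z c"
  then obtain x1 a1 t where x1: "(x1, a1) \<in> G" and "y = x1 + t *\<^sub>R z" "b = a1 + t * c"
    by (rule graph_extendE)
  moreover have "a1 + t * c \<le> norm (x1 + t *\<^sub>R z)"
  proof (cases "t = 0")
    case True
    then show ?thesis using dom x1 unfolding norm_dominated_def by auto
  next
    case False
    define s where "s = \<bar>t\<bar>"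
    have s: "s > 0" using False unfolding s_def by simp
    have "(x1 /\<^sub>R s, a1 / s) \<in> G"
      using linear_graph_scaleR[OF G x1, of "inverse s"] by (simp add: divide_inverse mult.commute)
    then have c_s: "a1 / s - norm (x1 /\<^sub>R s - z) \<le> c" "c \<le> norm (x1 /\<^sub>R s + z) - a1 / s"
      using c by auto
    consider "t > 0" | "t < 0" using False by linarith
    then show ?thesis
    proof cases
      case 1
      then have "x1 + t *\<^sub>R z = s *\<^sub>R (x1 /\<^sub>R s + z)" "t = s"
        using s unfolding s_def by (simp_all add: scaleR_add_right)
      then have "a1 + t * c = s * (a1 / s + c)" using s by (simp add: field_simps)
      also have "\<dots> \<le> s * norm (x1 /\<^sub>R s + z)"
        using c_s(2) s by (intro mult_left_mono) auto
      also have "\<dots> = norm (x1 + t *\<^sub>R z)" using \<open>x1 + t *\<^sub>R z = _\<close> s by simp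
      finally show ?thesis .
    next
      case 2
      then have "x1 + t *\<^sub>R z = s *\<^sub>R (x1 /\<^sub>R s - z)" "t = - s"
        using s unfolding s_def by (simp_all add: scaleR_diff_right)
      then have "a1 + t * c = s * (a1 / s - c)" using s by (simp add: field_simps)
      also have "\<dots> \<le> s * norm (x1 /\<^sub>R s - z)"
        using c_s(1) s by (intro mult_left_mono) auto
      also have "\<dots> = norm (x1 + t *\<^sub>R z)" using \<open>x1 + t *\<^sub>R z = _\<close> s by simp
      finally show ?thesis .
    qed
  qed
  ultimately show "b \<le> norm y" by simp
qed

lemma linear_graph_extend_proper:
  assumes G: "linear_graph G" and dom: "norm_dominated G" and z: "z \<notin> fst ` G"
  obtains G' where "linear_graph G'" "norm_dominated G'" "G \<subset> G'"
proof -
  obtain c where c: "\<forall>(u, a) \<in> G. a - norm (u - z) \<le> c \<and> c \<le> norm (u + z) - a"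
    using extension_constant_exists[OF G dom] by blast
  have "G \<subset> graph_extend G z c"
    using graph_extend_superset[OF linear_graph_zero[OF G], of z c] z by force
  with linear_graph_extend[OF G z] norm_dominated_graph_extend[OF G dom c] that show ?thesis
    by blast
qed

lemma linear_graph_Union_chain:
  assumes ne: "\<C> \<noteq> {}" and lin: "\<And>G. G \<in> \<C> \<Longrightarrow> linear_graph G"
    and chain: "\<And>A B. A \<in> \<C> \<Longrightarrow> B \<in> \<C> \<Longrightarrow> A \<subseteq> B \<or> B \<subseteq> A"
  shows "linear_graph (\<Union>\<C>)"
proof -
  have two: "\<exists>G\<in>\<C>. p \<in> G \<and> q \<in> G" if "p \<in> \<Union>\<C>" "q \<in> \<Union>\<C>" for p q
    using that chain by blast
  show ?thesis
    unfolding linear_graph_def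
  proof (intro conjI allI impI)
    show "(0, 0) \<in> \<Union>\<C>" using ne lin linear_graph_zero by blast
  next
    fix x a b assume "(x, a) \<in> \<Union>\<C>" "(x, b) \<in> \<Union>\<C>"
    then obtain G where "G \<in> \<C>" "(x, a) \<in> G" "(x, b) \<in> G" using two by blast
    then show "a = b" using lin linear_graph_unique by blast
  next
    fix x a y b assume "(x, a) \<in> \<Union>\<C>" "(y, b) \<in> \<Union>\<C>"
    then obtain G where "G \<in> \<C>" "(x, a) \<in> G" "(y, b) \<in> G" using two by blast
    then show "(x + y, a + b) \<in> \<Union>\<C>" using lin linear_graph_add by blast
  next
    fix x a r assume "(x, a) \<in> \<Union>\<C>"
    then show "(r *\<^sub>R x, r * a) \<in> \<Union>\<C>" using lin linear_graph_scaleR by blast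
  qed
qed

lemma total_linear_graph_blinfun:
  fixes G :: "('a::real_normed_vector \<times> real) set"
  assumes G: "linear_graph G" and dom: "norm_dominated G" and total: "fst ` G = UNIV"
  obtains F :: "'a \<Rightarrow>\<^sub>L real" where "norm F \<le> 1" "\<And>x a. (x, a) \<in> G \<Longrightarrow> blinfun_apply F x = a"
proof -
  define f where "f x = (THE a. (x, a) \<in> G)" for x
  have f_eq: "f x = a" if "(x, a) \<in> G" for x a
    unfolding f_def using that linear_graph_unique[OF G] by blast
  have f_graph: "(x, f x) \<in> G" for x
  proof -
    have "x \<in> fst ` G" using total by simp
    then obtain a where "(x, a) \<in> G" by force
    with f_eq show ?thesis by simp
  qed
  have f_le: "\<bar>f x\<bar> \<le> norm x" for x
  proof -
    have "f (- x) = - f x" using f_eq[OF linear_graph_scaleR[OF G f_graph[of x], of "-1"]] by simp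
    moreover have "f x \<le> norm x" "f (- x) \<le> norm (- x)"
      using dom f_graph unfolding norm_dominated_def by blast+
    ultimately show ?thesis by simp
  qed
  have "bounded_linear f"
  proof (rule bounded_linear_intro)
    show "f (x + y) = f x + f y" for x y using f_eq[OF linear_graph_add[OF G f_graph f_graph]] .
    show "f (r *\<^sub>R x) = r *\<^sub>R f x" for r x
      using f_eq[OF linear_graph_scaleR[OF G f_graph]] by simp
    show "norm (f x) \<le> norm x * 1" for x using f_le by simp
  qed
  then have F: "blinfun_apply (Blinfun f) = f" by (rule bounded_linear_Blinfun_apply)
  show ?thesis
  proof (rule that)
    show "norm (Blinfun f) \<le> 1" by (rule norm_blinfun_bound) (use f_le F in auto)
    show "blinfun_apply (Blinfun f) x = a" if "(x, a) \<in> G" for x a using F f_eq[OF that] by simp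
  qed
qed

text \<open>A maximal norm-dominated linear extension of G0 (Zorn) is total, since otherwise
  it could be extended once more.\<close>
lemma linear_graph_extends_to_blinfun:
  fixes G0 :: "('a::real_normed_vector \<times> real) set"
  assumes G0: "linear_graph G0" "norm_dominated G0"
  obtains F :: "'a \<Rightarrow>\<^sub>L real" where "norm F \<le> 1" "\<And>x a. (x, a) \<in> G0 \<Longrightarrow> blinfun_apply F x = a"
proof -
  define \<A> where "\<A> = {G. linear_graph G \<and> norm_dominated G \<and> G0 \<subseteq> G}"
  have "\<exists>M\<in>\<A>. \<forall>X\<in>\<A>. M \<subseteq> X \<longrightarrow> X = M"
  proof (rule subset_Zorn_nonempty)
    show "\<A> \<noteq> {}" using G0 unfolding \<A>_def by blast
  next
    fix \<C> assume ne: "\<C> \<noteq> {}" and "subset.chain \<A> \<C>"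
    then have sub: "\<C> \<subseteq> \<A>" and chain: "\<And>A B. A \<in> \<C> \<Longrightarrow> B \<in> \<C> \<Longrightarrow> A \<subseteq> B \<or> B \<subseteq> A"
      unfolding subset_chain_def by auto
    have "linear_graph (\<Union>\<C>)"
      using linear_graph_Union_chain[OF ne _ chain] sub unfolding \<A>_def by blast
    moreover have "norm_dominated (\<Union>\<C>)"
      using sub unfolding \<A>_def norm_dominated_def by blast
    moreover have "G0 \<subseteq> \<Union>\<C>"
      using sub ne unfolding \<A>_def by blast
    ultimately show "\<Union>\<C> \<in> \<A>" unfolding \<A>_def by blast
  qed
  then obtain M where "M \<in> \<A>" and max: "\<And>X. X \<in> \<A> \<Longrightarrow> M \<subseteq> X \<Longrightarrow> X = M"
    by blast
  then have M: "linear_graph M" "norm_dominated M" "G0 \<subseteq> M" unfolding \<A>_def by auto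
  have "fst ` M = UNIV"
  proof (rule ccontr)
    assume "fst ` M \<noteq> UNIV"
    then obtain z where "z \<notin> fst ` M" by blast
    with linear_graph_extend_proper[OF M(1,2)] obtain M' where
      M': "linear_graph M'" "norm_dominated M'" "M \<subset> M'" by blast
    then have "M' \<in> \<A>" using M(3) unfolding \<A>_def by blast
    with max[of M'] M'(3) show False by blast
  qed
  then obtain F :: "'a \<Rightarrow>\<^sub>L real" where "norm F \<le> 1" "\<And>x a. (x, a) \<in> M \<Longrightarrow> blinfun_apply F x = a"
    using total_linear_graph_blinfun[OF M(1,2)] by blast
  with M(3) that show ?thesis by blast
qed

section \<open>Support functionals and Birkhoff-James orthogonality\<close>

definition support_functional :: "'a::real_normed_vector \<Rightarrow> ('a \<Rightarrow>\<^sub>L real) \<Rightarrow> bool" where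
  "support_functional x f \<longleftrightarrow> norm f = 1 \<and> blinfun_apply f x = norm x"

lemma smooth_point_iff_unique_support_functional:
  "smooth_point x \<longleftrightarrow> x \<noteq> 0 \<and> (\<exists>!f. support_functional x f)"
  unfolding smooth_point_def support_functional_def ..

lemma support_functional_le:
  assumes "support_functional x f"
  shows "blinfun_apply f y \<le> norm y"
  using assms norm_blinfun[of f y] unfolding support_functional_def by simp

lemma support_functional_nonzero: "support_functional x f \<Longrightarrow> f \<noteq> 0"
  unfolding support_functional_def by auto

lemma birkhoff_orth_scaleR_le:
  assumes "birkhoff_orth x y"
  shows "\<bar>a\<bar> * norm x \<le> norm (a *\<^sub>R x + b *\<^sub>R y)"
proof (cases "a = 0")
  case False
  have "a *\<^sub>R x + b *\<^sub>R y = a *\<^sub>R (x + (b / a) *\<^sub>R y)" using False by (simp add: algebra_simps)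
  moreover have "norm x \<le> norm (x + (b / a) *\<^sub>R y)" using assms unfolding birkhoff_orth_def by blast
  ultimately show ?thesis by (simp add: mult_left_mono)
qed simp

definition span_pair_graph :: "'a::real_vector \<Rightarrow> 'a \<Rightarrow> real \<Rightarrow> ('a \<times> real) set" where
  "span_pair_graph x y k = {(a *\<^sub>R x + b *\<^sub>R y, a * k) | a b. True}"

lemma span_pair_graph_iff:
  "(v, c) \<in> span_pair_graph x y k \<longleftrightarrow> (\<exists>a b. v = a *\<^sub>R x + b *\<^sub>R y \<and> c = a * k)"
  unfolding span_pair_graph_def by blast

lemma linear_graph_span_pair_graph:
  assumes coord: "\<And>a b a' b'. a *\<^sub>R x + b *\<^sub>R y = a' *\<^sub>R x + b' *\<^sub>R y \<Longrightarrow> a = a'"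
  shows "linear_graph (span_pair_graph x y k)"
  unfolding linear_graph_def span_pair_graph_iff
proof (intro conjI allI impI)
  show "\<exists>a b. 0 = a *\<^sub>R x + b *\<^sub>R y \<and> 0 = a * k" by (intro exI[of _ 0]) simp
next
  fix v c d
  assume "\<exists>a b. v = a *\<^sub>R x + b *\<^sub>R y \<and> c = a * k" "\<exists>a b. v = a *\<^sub>R x + b *\<^sub>R y \<and> d = a * k"
  then show "c = d" using coord by metis
next
  fix v c w d
  assume "\<exists>a b. v = a *\<^sub>R x + b *\<^sub>R y \<and> c = a * k" "\<exists>a b. w = a *\<^sub>R x + b *\<^sub>R y \<and> d = a * k"
  then obtain a b a' b' where "v = a *\<^sub>R x + b *\<^sub>R y" "c = a * k"
    and "w = a' *\<^sub>R x + b' *\<^sub>R y" "d = a' * k"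
    by blast
  then show "\<exists>a b. v + w = a *\<^sub>R x + b *\<^sub>R y \<and> c + d = a * k"
    by (intro exI[of _ "a + a'"] exI[of _ "b + b'"]) (simp add: algebra_simps)
next
  fix v c r
  assume "\<exists>a b. v = a *\<^sub>R x + b *\<^sub>R y \<and> c = a * k"
  then obtain a b where "v = a *\<^sub>R x + b *\<^sub>R y" "c = a * k" by blast
  then show "\<exists>a b. r *\<^sub>R v = a *\<^sub>R x + b *\<^sub>R y \<and> r * c = a * k"
    by (intro exI[of _ "r * a"] exI[of _ "r * b"]) (simp add: algebra_simps)
qed

lemma birkhoff_orth_coordinate_unique:
  assumes x: "x \<noteq> 0" and orth: "birkhoff_orth x y"
    and eq: "a *\<^sub>R x + b *\<^sub>R y = a' *\<^sub>R x + b' *\<^sub>R y"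
  shows "a = a'"
proof -
  have "(a - a') *\<^sub>R x + (b - b') *\<^sub>R y = 0" using eq by (simp add: algebra_simps)
  then have "\<bar>a - a'\<bar> * norm x \<le> 0"
    using birkhoff_orth_scaleR_le[OF orth, of "a - a'" "b - b'"] by simp
  then show "a = a'" using x by (simp add: mult_le_0_iff)
qed

lemma norm_dominated_span_pair_graph:
  assumes "birkhoff_orth x y"
  shows "norm_dominated (span_pair_graph x y (norm x))"
  unfolding norm_dominated_def
proof clarify
  fix v c assume "(v, c) \<in> span_pair_graph x y (norm x)"
  then obtain a b where "v = a *\<^sub>R x + b *\<^sub>R y" "c = a * norm x"
    unfolding span_pair_graph_iff by blast
  moreover have "a * norm x \<le> \<bar>a\<bar> * norm x" by (simp add: mult_right_mono)
  ultimately show "c \<le> norm v" using birkhoff_orth_scaleR_le[OF assms, of a b] by simp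
qed

text \<open>James' characterization: extend a x + b y \<mapsto> a \<parallel>x\<parallel> from span {x, y} by Hahn-Banach.\<close>
lemma birkhoff_orth_imp_support_functional:
  assumes x: "x \<noteq> 0" and orth: "birkhoff_orth x y"
  obtains f where "support_functional x f" "blinfun_apply f y = 0"
proof -
  let ?G = "span_pair_graph x y (norm x)"
  have "linear_graph ?G"
    using linear_graph_span_pair_graph birkhoff_orth_coordinate_unique[OF x orth] by blast
  then obtain f where f: "norm f \<le> 1" "\<And>v c. (v, c) \<in> ?G \<Longrightarrow> blinfun_apply f v = c"
    using linear_graph_extends_to_blinfun norm_dominated_span_pair_graph[OF orth] by blast
  have "(1 *\<^sub>R x + 0 *\<^sub>R y, 1 * norm x) \<in> ?G" "(0 *\<^sub>R x + 1 *\<^sub>R y, 0 * norm x) \<in> ?G"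
    unfolding span_pair_graph_iff by blast+
  then have fx: "blinfun_apply f x = norm x" and fy: "blinfun_apply f y = 0"
    using f(2) by auto
  have "norm x \<le> norm f * norm x" using norm_blinfun[of f x] fx by simp
  then have "norm f = 1" using f(1) x by simp
  with fx fy that show ?thesis unfolding support_functional_def by blast
qed

lemma support_functional_imp_birkhoff_orth:
  assumes "support_functional x f" "blinfun_apply f y = 0"
  shows "birkhoff_orth x y"
  unfolding birkhoff_orth_def
proof
  fix t :: real
  have "norm x = blinfun_apply f (x + t *\<^sub>R y)"
    using assms unfolding support_functional_def
    by (simp add: blinfun.add_right blinfun.scaleR_right)
  also have "\<dots> \<le> norm (x + t *\<^sub>R y)" using support_functional_le[OF assms(1)] .
  finally show "norm x \<le> norm (x + t *\<^sub>R y)" .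
qed

lemma support_functional_exists:
  assumes "x \<noteq> 0"
  obtains f where "support_functional x f"
  using birkhoff_orth_imp_support_functional[OF assms, of 0] unfolding birkhoff_orth_def by auto

lemma eq_if_functionals_eq:
  fixes u v :: "'a::real_normed_vector"
  assumes "\<And>f :: 'a \<Rightarrow>\<^sub>L real. blinfun_apply f u = blinfun_apply f v"
  shows "u = v"
proof (rule ccontr)
  assume "u \<noteq> v"
  then have "u - v \<noteq> 0" by simp
  then obtain f where "support_functional (u - v) f" by (rule support_functional_exists)
  with assms[of f] \<open>u \<noteq> v\<close> show False
    unfolding support_functional_def by (simp add: blinfun.diff_right)
qed

section \<open>Support functionals of operators\<close>

definition eval_functional ::
    "'a::real_normed_vector \<Rightarrow> ('b::real_normed_vector \<Rightarrow>\<^sub>L real) \<Rightarrow> (('a \<Rightarrow>\<^sub>L 'b) \<Rightarrow>\<^sub>L real)" where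
  "eval_functional x g = Blinfun (\<lambda>A. blinfun_apply g (blinfun_apply A x))"

lemma eval_functional_apply [simp]:
  "blinfun_apply (eval_functional x g) A = blinfun_apply g (blinfun_apply A x)"
proof -
  have "bounded_linear (\<lambda>A. blinfun_apply g (blinfun_apply A x))"
    by (rule bounded_linear_compose[OF blinfun.bounded_linear_right blinfun.bounded_linear_left])
  then show ?thesis unfolding eval_functional_def by (simp add: bounded_linear_Blinfun_apply)
qed

lemma norm_attain_set_uminus: "x \<in> norm_attain_set T \<Longrightarrow> - x \<in> norm_attain_set T"
  unfolding norm_attain_set_def by (simp add: blinfun.minus_right)

lemma norm_attain_set_apply_nonzero:
  "T \<noteq> 0 \<Longrightarrow> x \<in> norm_attain_set T \<Longrightarrow> blinfun_apply T x \<noteq> 0"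
  unfolding norm_attain_set_def by auto

lemma support_functional_eval_functional:
  fixes T :: "'a::real_normed_vector \<Rightarrow>\<^sub>L 'b::real_normed_vector"
  assumes T: "T \<noteq> 0" and x: "x \<in> norm_attain_set T"
    and g: "support_functional (blinfun_apply T x) g"
  shows "support_functional T (eval_functional x g)"
proof -
  have x1: "norm x = 1" and Tx: "norm (blinfun_apply T x) = norm T"
    using x unfolding norm_attain_set_def by auto
  have "norm (eval_functional x g) \<le> 1"
  proof (rule norm_blinfun_bound)
    fix A :: "'a \<Rightarrow>\<^sub>L 'b"
    have "norm (blinfun_apply g (blinfun_apply A x)) \<le> norm g * norm (blinfun_apply A x)"
      by (rule norm_blinfun)
    also have "\<dots> \<le> 1 * norm A"
      using norm_blinfun[of A x] x1 g unfolding support_functional_def by simp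
    finally show "norm (blinfun_apply (eval_functional x g) A) \<le> 1 * norm A" by simp
  qed simp
  moreover have val: "blinfun_apply (eval_functional x g) T = norm T"
    using g Tx unfolding support_functional_def by simp
  moreover have "norm T \<le> norm (eval_functional x g) * norm T"
    using norm_blinfun[of "eval_functional x g" T] val by simp
  then have "norm (eval_functional x g) \<ge> 1" using T by simp
  ultimately show ?thesis unfolding support_functional_def by simp
qed

text \<open>Testing against the rank-one operators v \<mapsto> f(v) y shows that the evaluation functional
  determines x \<otimes> g up to scaling.\<close>
lemma eval_functional_eq_imp_collinear:
  fixes x x' :: "'a::real_normed_vector" and g g' :: "'b::real_normed_vector \<Rightarrow>\<^sub>L real"
  assumes eq: "eval_functional x g = eval_functional x' g'" and x: "x \<noteq> 0" and g': "g' \<noteq> 0"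
  obtains c where "x' = c *\<^sub>R x" "g = c *\<^sub>R g'"
proof -
  have E: "blinfun_apply f x * blinfun_apply g y = blinfun_apply f x' * blinfun_apply g' y"
    for f :: "'a \<Rightarrow>\<^sub>L real" and y
    using arg_cong[OF eq, of "\<lambda>\<Phi>. blinfun_apply \<Phi> (blinfun_scaleR_left y o\<^sub>L f)"]
    by (simp add: blinfun.scaleR_right)
  obtain f0 where f0: "support_functional x f0" using x by (rule support_functional_exists)
  define c where "c = blinfun_apply f0 x' / norm x"
  have g_eq: "g = c *\<^sub>R g'"
  proof (rule blinfun_eqI)
    fix y
    show "blinfun_apply g y = blinfun_apply (c *\<^sub>R g') y"
      using E[of f0 y] f0 x unfolding c_def support_functional_def
      by (simp add: blinfun.scaleR_left field_simps)
  qed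
  obtain y0 where y0: "blinfun_apply g' y0 \<noteq> 0" using g' blinfun_eqI[of g' 0] by auto
  have "x' = c *\<^sub>R x"
  proof (rule eq_if_functionals_eq)
    fix f :: "'a \<Rightarrow>\<^sub>L real"
    have "blinfun_apply f x' * blinfun_apply g' y0 = (c * blinfun_apply f x) * blinfun_apply g' y0"
      using E[of f y0] g_eq by (auto simp: blinfun.scaleR_left mult.commute)
    then show "blinfun_apply f x' = blinfun_apply f (c *\<^sub>R x)"
      using y0 by (simp add: blinfun.scaleR_right)
  qed
  with g_eq that show ?thesis by blast
qed

lemma birkhoff_orth_apply_imp_birkhoff_orth:
  assumes x: "x \<in> norm_attain_set T"
    and orth: "birkhoff_orth (blinfun_apply T x) (blinfun_apply A x)"
  shows "birkhoff_orth T A"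
  unfolding birkhoff_orth_def
proof
  fix t :: real
  have "norm T = norm (blinfun_apply T x)" using x unfolding norm_attain_set_def by simp
  also have "\<dots> \<le> norm (blinfun_apply T x + t *\<^sub>R blinfun_apply A x)"
    using orth unfolding birkhoff_orth_def by blast
  also have "\<dots> = norm (blinfun_apply (T + t *\<^sub>R A) x)"
    by (simp add: blinfun.add_left blinfun.scaleR_left)
  also have "\<dots> \<le> norm (T + t *\<^sub>R A)"
    using norm_blinfun[of "T + t *\<^sub>R A" x] x unfolding norm_attain_set_def by simp
  finally show "norm T \<le> norm (T + t *\<^sub>R A)" .
qed

lemma smooth_point_support_functional_unique:
  "smooth_point x \<Longrightarrow> support_functional x f \<Longrightarrow> support_functional x f' \<Longrightarrow> f = f'"
  unfolding smooth_point_iff_unique_support_functional by blast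

lemma smooth_point_nonzero: "smooth_point x \<Longrightarrow> x \<noteq> 0"
  unfolding smooth_point_def by blast

lemma smooth_point_eval_functional_eq:
  fixes T :: "'a::real_normed_vector \<Rightarrow>\<^sub>L 'b::real_normed_vector"
  assumes T: "smooth_point T"
    and x: "x \<in> norm_attain_set T" "support_functional (blinfun_apply T x) g"
    and x': "x' \<in> norm_attain_set T" "support_functional (blinfun_apply T x') g'"
  shows "eval_functional x g = eval_functional x' g'"
  using smooth_point_support_functional_unique[OF T]
    support_functional_eval_functional[OF smooth_point_nonzero[OF T]] x x' by blast

lemma smooth_point_norm_attain_set:
  fixes T :: "'a::real_normed_vector \<Rightarrow>\<^sub>L 'b::real_normed_vector"
  assumes T: "smooth_point T" and x0: "x0 \<in> norm_attain_set T"
  shows "norm_attain_set T = {x0, - x0}"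
proof (intro equalityI subsetI)
  fix x1 assume x1: "x1 \<in> norm_attain_set T"
  have T0: "T \<noteq> 0" using smooth_point_nonzero[OF T] .
  obtain g0 where g0: "support_functional (blinfun_apply T x0) g0"
    using norm_attain_set_apply_nonzero[OF T0 x0] by (rule support_functional_exists)
  obtain g1 where g1: "support_functional (blinfun_apply T x1) g1"
    using norm_attain_set_apply_nonzero[OF T0 x1] by (rule support_functional_exists)
  have "x0 \<noteq> 0" using x0 unfolding norm_attain_set_def by auto
  then obtain c where "x1 = c *\<^sub>R x0"
    by (rule eval_functional_eq_imp_collinear[OF smooth_point_eval_functional_eq[OF T x0 g0 x1 g1]
          _ support_functional_nonzero[OF g1]])
  moreover have "norm x0 = 1" "norm x1 = 1" using x0 x1 unfolding norm_attain_set_def by auto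
  ultimately have "\<bar>c\<bar> = 1" by simp
  then have "c = 1 \<or> c = -1" by linarith
  with \<open>x1 = c *\<^sub>R x0\<close> show "x1 \<in> {x0, - x0}" by auto
next
  show "x \<in> norm_attain_set T" if "x \<in> {x0, - x0}" for x
    using that x0 norm_attain_set_uminus[OF x0] by blast
qed

lemma smooth_point_apply_norm_attaining:
  fixes T :: "'a::real_normed_vector \<Rightarrow>\<^sub>L 'b::real_normed_vector"
  assumes T: "smooth_point T" and x0: "x0 \<in> norm_attain_set T"
  shows "smooth_point (blinfun_apply T x0)"
proof -
  have Tx0: "blinfun_apply T x0 \<noteq> 0"
    using norm_attain_set_apply_nonzero[OF smooth_point_nonzero[OF T] x0] .
  obtain g where g: "support_functional (blinfun_apply T x0) g"
    using Tx0 by (rule support_functional_exists)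
  have "g' = g" if g': "support_functional (blinfun_apply T x0) g'" for g'
  proof -
    have "x0 \<noteq> 0" using x0 unfolding norm_attain_set_def by auto
    then obtain c where "x0 = c *\<^sub>R x0" "g = c *\<^sub>R g'"
      by (rule eval_functional_eq_imp_collinear[OF smooth_point_eval_functional_eq[OF T x0 g x0 g']
            _ support_functional_nonzero[OF g']])
    then show "g' = g" using \<open>x0 \<noteq> 0\<close> by (metis scaleR_cancel_right scaleR_one)
  qed
  with Tx0 g show ?thesis unfolding smooth_point_iff_unique_support_functional by blast
qed

lemma smooth_point_birkhoff_orth_iff:
  fixes T :: "'a::real_normed_vector \<Rightarrow>\<^sub>L 'b::real_normed_vector"
  assumes T: "smooth_point T" and x0: "x0 \<in> norm_attain_set T"
  shows "birkhoff_orth T A \<longleftrightarrow> birkhoff_orth (blinfun_apply T x0) (blinfun_apply A x0)"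
proof
  assume "birkhoff_orth T A"
  then obtain \<Psi> where \<Psi>: "support_functional T \<Psi>" "blinfun_apply \<Psi> A = 0"
    using smooth_point_nonzero[OF T] by (blast elim: birkhoff_orth_imp_support_functional)
  have T0: "T \<noteq> 0" using smooth_point_nonzero[OF T] .
  obtain g where g: "support_functional (blinfun_apply T x0) g"
    using norm_attain_set_apply_nonzero[OF T0 x0] by (rule support_functional_exists)
  have "\<Psi> = eval_functional x0 g"
    using smooth_point_support_functional_unique[OF T \<Psi>(1)]
      support_functional_eval_functional[OF T0 x0 g] .
  with \<Psi>(2) have "blinfun_apply g (blinfun_apply A x0) = 0" by simp
  with g show "birkhoff_orth (blinfun_apply T x0) (blinfun_apply A x0)"
    by (rule support_functional_imp_birkhoff_orth)
qed (rule birkhoff_orth_apply_imp_birkhoff_orth[OF x0])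

lemma smooth_point_blinfunI:
  fixes T :: "'a::real_normed_vector \<Rightarrow>\<^sub>L 'b::real_normed_vector"
  assumes x0: "x0 \<in> norm_attain_set T" and Tx0: "smooth_point (blinfun_apply T x0)"
    and orth: "\<And>A. birkhoff_orth T A \<Longrightarrow> birkhoff_orth (blinfun_apply T x0) (blinfun_apply A x0)"
  shows "smooth_point T"
proof -
  have T0: "T \<noteq> 0" using smooth_point_nonzero[OF Tx0] by auto
  obtain g where g: "support_functional (blinfun_apply T x0) g"
    using smooth_point_nonzero[OF Tx0] by (rule support_functional_exists)
  have "\<Psi> = eval_functional x0 g" if \<Psi>: "support_functional T \<Psi>" for \<Psi>
  proof (rule blinfun_eqI)
    fix A :: "'a \<Rightarrow>\<^sub>L 'b"
    define r where "r = blinfun_apply \<Psi> A / norm T"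
    define B where "B = A - r *\<^sub>R T"
    have "blinfun_apply \<Psi> B = 0" using \<Psi> T0 unfolding B_def r_def support_functional_def
      by (simp add: blinfun.diff_right blinfun.scaleR_right)
    with \<Psi> have "birkhoff_orth (blinfun_apply T x0) (blinfun_apply B x0)"
      by (intro orth support_functional_imp_birkhoff_orth)
    then obtain h where h: "support_functional (blinfun_apply T x0) h"
      "blinfun_apply h (blinfun_apply B x0) = 0"
      using smooth_point_nonzero[OF Tx0] by (blast elim: birkhoff_orth_imp_support_functional)
    have "h = g" using smooth_point_support_functional_unique[OF Tx0 h(1) g] .
    moreover have "norm (blinfun_apply T x0) = norm T"
      using x0 unfolding norm_attain_set_def by simp
    ultimately have "blinfun_apply g (blinfun_apply A x0) = r * norm T"
      using g h(2) unfolding B_def support_functional_def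
      by (simp add: blinfun.diff_right blinfun.scaleR_right blinfun.diff_left blinfun.scaleR_left)
    then show "blinfun_apply \<Psi> A = blinfun_apply (eval_functional x0 g) A"
      using T0 unfolding r_def by simp
  qed
  with T0 support_functional_eval_functional[OF T0 x0 g] show ?thesis
    unfolding smooth_point_iff_unique_support_functional by blast
qed

theorem theorem3p3:
  fixes T :: "'a::real_normed_vector \<Rightarrow>\<^sub>L 'b::real_normed_vector"
  assumes "T \<noteq> 0"
    and "norm_attain_set T \<noteq> {}"
  shows "smooth_point T \<longleftrightarrow>
    (\<exists>x0. norm x0 = 1 \<and> norm_attain_set T = {x0, - x0}
       \<and> smooth_point (blinfun_apply T x0)
       \<and> (\<forall>A :: 'a \<Rightarrow>\<^sub>L 'b. birkhoff_orth T A \<longleftrightarrow>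
              birkhoff_orth (blinfun_apply T x0) (blinfun_apply A x0)))"
    (is "_ \<longleftrightarrow> ?rhs")
proof
  assume T: "smooth_point T"
  obtain x0 where x0: "x0 \<in> norm_attain_set T" using assms(2) by blast
  then have "norm x0 = 1" unfolding norm_attain_set_def by simp
  with smooth_point_norm_attain_set[OF T x0] smooth_point_apply_norm_attaining[OF T x0]
    smooth_point_birkhoff_orth_iff[OF T x0]
  show ?rhs by blast
next
  assume ?rhs
  then obtain x0 where "norm_attain_set T = {x0, - x0}" "smooth_point (blinfun_apply T x0)"
    "\<And>A. birkhoff_orth T A \<Longrightarrow> birkhoff_orth (blinfun_apply T x0) (blinfun_apply A x0)"
    by blast
  then show "smooth_point T" by (intro smooth_point_blinfunI[of x0]) auto
qed

end
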